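(* Consider a single individual with initial wealth $x>0$ who holds all wealth in cash, in a market with $\mu=r=0$ (so investment in the stock is of no benefit and the optimal stock holding is zero), so that wealth evolves by $\frac{\mathrm d x_t}{\mathrm d t}=-\gamma_t$, $x_0=x$, where $\gamma_t\ge 0$ is the consumption rate and $x_t\ge 0$ is required. The individual's death time $\tau$ is exponentially distributed with constant intensity $\lambda>0$, and the individual has exponential Kihlstrom--Mirman preferences with zero discount rate, i.e. seeks to maximize $\mathbb E\big[-\exp\big(-\int_0^\tau u(\gamma_t)\,\mathrm dt\big)\big]$, where $u(y)=a\,y^k+c$ for $y\ge 0$, with constants $a>0$, $0<k<1$, $c$, and $c+\lambda>0$. Let $\hat v(x)$ denote the value function (the supremum of this objective) as a function of initial wealth. Then $\hat v(x)$ satisfies the implicit equation $$x=(1-k)^{1-\frac1k}\,a^{-1/k}\,\lambda^{-1/k}\,(c+\lambda)^{\frac1k-1}\,\big(\hat v(c+\lambda)+\lambda\big)^{1/k}\;{}_2F_1\!\Big(\tfrac1k,\tfrac1k;1+\tfrac1k;\tfrac{\lambda+\hat v(c+\lambda)}{\lambda}\Big),$$ and, setting $w_0:=c\,\hat v(x)+\lambda+\lambda\,\hat v(x)$, the optimal consumption rate at time $t\ge0$ is $$\gamma^*_t=(1-k)^{-1/k}a^{-1/k}\lambda^{-1/k}(c+\lambda)^{1/k}\Big(w_0e^{\frac{kt(c+\lambda)}{k-1}}\Big)^{1/k}\Big(1-\frac{w_0e^{\frac{kt(c+\lambda)}{k-1}}}{\lambda}\Big)^{-1/k}.$$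
   Context: ${}_2F_1$ denotes the Gauss hypergeometric function. The value at zero wealth is $\hat v(0)=-\lambda/(c+\lambda)$ (consumption is then identically zero). *)

theory Defs
  imports "HOL-Probability.Probability"
begin

definition hyp2F1 :: "real \<Rightarrow> real \<Rightarrow> real \<Rightarrow> real \<Rightarrow> real" where
  "hyp2F1 a b c z =
     (\<Sum>n. pochhammer a n * pochhammer b n / (pochhammer c n * fact n) * z ^ n)"

definition util :: "real \<Rightarrow> real \<Rightarrow> real \<Rightarrow> real \<Rightarrow> real" where
  "util a k c y = a * y powr k + c"

definition admissible :: "real \<Rightarrow> (real \<Rightarrow> real) \<Rightarrow> bool" where
  "admissible x \<gamma> \<longleftrightarrow>
     \<gamma> \<in> borel_measurable borel \<and>
     (\<forall>t\<ge>0. \<gamma> t \<ge> 0) \<and>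
     (\<forall>t\<ge>0. set_integrable lborel {0..t} \<gamma>) \<and>
     (\<forall>t\<ge>0. x - (LBINT s=0..t. \<gamma> s) \<ge> 0)"

definition objective :: "real \<Rightarrow> real \<Rightarrow> real \<Rightarrow> real \<Rightarrow> (real \<Rightarrow> real) \<Rightarrow> real" where
  "objective a k c l \<gamma> =
     integral\<^sup>L (density lborel (exponential_density l))
       (\<lambda>s. - exp (- (LBINT t=0..s. util a k c (\<gamma> t))))"

definition vhat :: "real \<Rightarrow> real \<Rightarrow> real \<Rightarrow> real \<Rightarrow> real \<Rightarrow> real" where
  "vhat a k c l x = (SUP \<gamma> \<in> {\<gamma>. admissible x \<gamma>}. objective a k c l \<gamma>)"

end

theory Submission
  imports Defs
begin

text \<open>The candidate optimum comes from the first-order conditions: along it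
  \<open>zeta t = w\<^sub>t / l\<close> decays like \<open>exp (- k (c + l) t / (1 - k))\<close>, consumption is a constant
  times \<open>(zeta / (1 - zeta)) powr (1 / k)\<close>, and the wealth it uses up, \<open>\<integral>\<^sub>0\<^sup>\<infinity>\<close> consumption, is an
  incomplete beta function \<open>z powr b * hyp2F1 b b (1 + b) z\<close> of \<open>z = zeta 0\<close> with \<open>b = 1 / k\<close>;
  it maps \<open>(0, 1)\<close> onto \<open>(0, \<infinity>)\<close>, so every initial wealth is attained.

  Maximising \<open>- E exp (- \<integral>\<^sub>0\<^sup>\<tau> u)\<close> means minimising
  \<open>\<integral>\<^sub>0\<^sup>\<infinity> l exp (- (c + l) s - a \<integral>\<^sub>0\<^sup>s \<gamma>\<^sup>k) ds\<close>. Bounding \<open>exp\<close> below by its tangent at the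
  candidate's exponent and exchanging the order of integration reduces this to
  \<open>\<integral> a \<gamma>\<^sup>k costate \<le> \<integral> a consumption\<^sup>k costate\<close>, where \<open>costate t\<close> is the candidate's
  integrand integrated over \<open>[t, \<infinity>)\<close>. By the first-order condition \<open>a costate\<close> is a multiple
  of \<open>consumption powr (1 - k)\<close>, so this is Young's inequality together with the budget
  constraint \<open>\<integral> \<gamma> \<le> wealth 0 = \<integral> consumption\<close>.\<close>

section \<open>The hypergeometric function \<open>hyp2F1 b b (1 + b)\<close>\<close>

definition hyp_coeff :: "real \<Rightarrow> nat \<Rightarrow> real" where
  "hyp_coeff b n = pochhammer b n * pochhammer b n / (pochhammer (1 + b) n * fact n)"

lemma hyp2F1_diag: "hyp2F1 b b (1 + b) z = (\<Sum>n. hyp_coeff b n * z ^ n)"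
  by (simp add: hyp2F1_def hyp_coeff_def)

lemma hyp_coeff_eq:
  assumes "b > 0"
  shows "hyp_coeff b n = b / (b + real n) * (pochhammer b n / fact n)"
proof -
  have "b * pochhammer (1 + b) n = pochhammer b n * (b + real n)"
    by (metis pochhammer_rec pochhammer_Suc add.commute)
  then have e: "pochhammer (1 + b) n = pochhammer b n * ((b + real n) / b)"
    using assms by (simp add: field_simps)
  have "pochhammer b n > 0"
    using assms by (simp add: pochhammer_pos)
  then have "hyp_coeff b n = pochhammer b n / ((b + real n) / b * fact n)"
    unfolding hyp_coeff_def e by (simp add: ac_simps)
  then show ?thesis
    using assms by (simp add: field_simps)
qed

lemma hyp_coeff_recurrence: "b > 0 \<Longrightarrow> (b + real n) * hyp_coeff b n = b * (pochhammer b n / fact n)"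
  using hyp_coeff_eq[of b n] by (simp add: add_pos_nonneg)

lemma hyp_coeff_nonneg: "b > 0 \<Longrightarrow> hyp_coeff b n \<ge> 0"
  by (simp add: hyp_coeff_def pochhammer_pos less_imp_le)

lemma hyp_coeff_le: "b > 0 \<Longrightarrow> hyp_coeff b n \<le> pochhammer b n / fact n"
  unfolding hyp_coeff_eq by (intro mult_left_le_one_le) (auto simp: pochhammer_pos less_imp_le)

lemma pochhammer_sums_powr:
  fixes b z :: real
  assumes "\<bar>z\<bar> < 1"
  shows "(\<lambda>n. pochhammer b n / fact n * z ^ n) sums (1 - z) powr (- b)"
proof -
  have "(\<lambda>n. ((- b) gchoose n) * (- z) ^ n) sums (1 + (- z)) powr (- b)"
    using assms by (intro gen_binomial_real) simp
  moreover have "((- b) gchoose n) * (- z) ^ n = pochhammer b n / fact n * z ^ n" for n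
  proof -
    have "((- b) gchoose n) * (- z) ^ n = ((- 1) ^ n * (- 1) ^ n) * (pochhammer b n / fact n * z ^ n)"
      by (simp add: gbinomial_pochhammer power_minus[of z])
    also have "(- 1 :: real) ^ n * (- 1) ^ n = 1"
      by (simp flip: power_add)
    finally show ?thesis by simp
  qed
  ultimately show ?thesis by simp
qed

lemma summable_hyp_coeff:
  assumes "b > 0" "\<bar>z\<bar> < 1"
  shows "summable (\<lambda>n. hyp_coeff b n * z ^ n)"
proof (rule summable_comparison_test)
  show "summable (\<lambda>n. pochhammer b n / fact n * \<bar>z\<bar> ^ n)"
    using pochhammer_sums_powr[of "\<bar>z\<bar>" b] assms by (simp add: sums_summable)
  show "\<exists>N. \<forall>n\<ge>N. norm (hyp_coeff b n * z ^ n) \<le> pochhammer b n / fact n * \<bar>z\<bar> ^ n"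
  proof (intro exI allI impI)
    fix n :: nat
    have "hyp_coeff b n * \<bar>z\<bar> ^ n \<le> pochhammer b n / fact n * \<bar>z\<bar> ^ n"
      by (intro mult_right_mono hyp_coeff_le assms) simp
    then show "norm (hyp_coeff b n * z ^ n) \<le> pochhammer b n / fact n * \<bar>z\<bar> ^ n"
      using hyp_coeff_nonneg[OF assms(1), of n] by (simp add: abs_mult power_abs)
  qed
qed

text \<open>Termwise this is \<open>hyp_coeff_recurrence\<close>, and the right-hand side is the binomial series.\<close>
lemma hyp2F1_diag_ode:
  assumes "b > 0" "\<bar>z\<bar> < 1"
  obtains F' where "((\<lambda>z. hyp2F1 b b (1 + b) z) has_real_derivative F') (at z)"
    and "b * hyp2F1 b b (1 + b) z + z * F' = b * (1 - z) powr (- b)"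
proof
  define F' where "F' = (\<Sum>n. diffs (hyp_coeff b) n * z ^ n)"
  show "((\<lambda>z. hyp2F1 b b (1 + b) z) has_real_derivative F') (at z)"
    unfolding hyp2F1_diag F'_def
    by (rule termdiffs_strong'[where K = 1]) (use assms summable_hyp_coeff in auto)
  have S1: "(\<lambda>n. hyp_coeff b n * z ^ n) sums hyp2F1 b b (1 + b) z"
    unfolding hyp2F1_diag using summable_hyp_coeff[OF assms] by (simp add: summable_sums)
  have "summable (\<lambda>n. diffs (hyp_coeff b) n * z ^ n)"
    by (rule termdiff_converges[where K = 1]) (use assms summable_hyp_coeff in auto)
  then have "(\<lambda>n. z * (diffs (hyp_coeff b) n * z ^ n)) sums (z * F')"
    unfolding F'_def by (intro sums_mult summable_sums)
  moreover have "(\<lambda>n. z * (diffs (hyp_coeff b) n * z ^ n)) = (\<lambda>n. real (Suc n) * hyp_coeff b (Suc n) * z ^ Suc n)"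
    by (simp add: diffs_def fun_eq_iff algebra_simps)
  ultimately have "(\<lambda>n. real (Suc n) * hyp_coeff b (Suc n) * z ^ Suc n) sums (z * F')"
    by simp
  then have S2: "(\<lambda>n. real n * hyp_coeff b n * z ^ n) sums (z * F')"
    using sums_Suc_iff[of "\<lambda>n. real n * hyp_coeff b n * z ^ n"] by simp
  have "(\<lambda>n. b * (hyp_coeff b n * z ^ n) + real n * hyp_coeff b n * z ^ n)
      sums (b * hyp2F1 b b (1 + b) z + z * F')"
    by (intro sums_add sums_mult S1 S2)
  moreover have "b * (hyp_coeff b n * z ^ n) + real n * hyp_coeff b n * z ^ n
      = b * (pochhammer b n / fact n * z ^ n)" for n
  proof -
    have "b * (hyp_coeff b n * z ^ n) + real n * hyp_coeff b n * z ^ n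
        = ((b + real n) * hyp_coeff b n) * z ^ n"
      by (simp add: algebra_simps)
    then show ?thesis
      using hyp_coeff_recurrence[OF assms(1), of n] by simp
  qed
  ultimately have "(\<lambda>n. b * (pochhammer b n / fact n * z ^ n)) sums (b * hyp2F1 b b (1 + b) z + z * F')"
    by simp
  moreover have "(\<lambda>n. b * (pochhammer b n / fact n * z ^ n)) sums (b * (1 - z) powr (- b))"
    by (intro sums_mult pochhammer_sums_powr) (use assms in simp)
  ultimately show "b * hyp2F1 b b (1 + b) z + z * F' = b * (1 - z) powr (- b)"
    by (metis sums_unique2)
qed

lemma isCont_hyp2F1_diag: "b > 0 \<Longrightarrow> \<bar>z\<bar> < 1 \<Longrightarrow> isCont (\<lambda>z. hyp2F1 b b (1 + b) z) z"
  by (metis DERIV_isCont hyp2F1_diag_ode)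

lemma hyp2F1_diag_nonneg: "b > 0 \<Longrightarrow> 0 \<le> z \<Longrightarrow> z < 1 \<Longrightarrow> hyp2F1 b b (1 + b) z \<ge> 0"
  unfolding hyp2F1_diag
  by (rule suminf_nonneg) (auto intro: summable_hyp_coeff hyp_coeff_nonneg mult_nonneg_nonneg)

lemma pochhammer_ge_fact: "b \<ge> 1 \<Longrightarrow> pochhammer b n \<ge> (fact n :: real)"
proof (induction n)
  case (Suc n)
  have "fact n * (1 + real n) \<le> pochhammer b n * (b + real n)"
    using Suc by (intro mult_mono) (auto intro: order_trans[OF fact_ge_zero])
  then show ?case by (simp add: pochhammer_Suc algebra_simps)
qed simp

lemma hyp_coeff_ge: "b \<ge> 1 \<Longrightarrow> hyp_coeff b n \<ge> 1 / (1 + real n)"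
proof -
  assume b: "b \<ge> 1"
  have "1 / (1 + real n) \<le> b / (b + real n)"
    using b mult_right_mono[OF b, of "real n"] by (simp add: field_simps)
  also have "\<dots> \<le> b / (b + real n) * (pochhammer b n / fact n)"
  proof -
    have "1 \<le> pochhammer b n / fact n"
      using pochhammer_ge_fact[OF b, of n] by simp
    then have "b / (b + real n) * 1 \<le> b / (b + real n) * (pochhammer b n / fact n)"
      using b by (intro mult_left_mono) auto
    then show ?thesis by simp
  qed
  finally show ?thesis using hyp_coeff_eq[of b n] b by simp
qed

lemma hyp2F1_diag_ge_harm:
  assumes "b \<ge> 1" "0 < z" "z < 1"
  shows "hyp2F1 b b (1 + b) z \<ge> z ^ N * harm N"
proof -
  have "z ^ N * harm N = (\<Sum>n<N. 1 / (1 + real n) * z ^ N)"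
    by (simp add: harm_altdef sum_distrib_left field_simps)
  also have "\<dots> \<le> (\<Sum>n<N. hyp_coeff b n * z ^ n)"
  proof (rule sum_mono)
    fix n assume "n \<in> {..<N}"
    then have "z ^ N \<le> z ^ n" using assms by (intro power_decreasing) auto
    then show "1 / (1 + real n) * z ^ N \<le> hyp_coeff b n * z ^ n"
      using hyp_coeff_ge[OF assms(1), of n] hyp_coeff_nonneg[of b n] assms by (intro mult_mono) auto
  qed
  also have "\<dots> \<le> hyp2F1 b b (1 + b) z"
    unfolding hyp2F1_diag
    by (rule sum_le_suminf) (use assms summable_hyp_coeff hyp_coeff_nonneg in auto)
  finally show ?thesis .
qed

text \<open>\<open>inc_beta b z = b \<integral>\<^sub>0\<^sup>z t powr (b - 1) (1 - t) powr (- b) dt\<close> is \<open>b\<close> times the incomplete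
  beta function \<open>B(z; b, 1 - b)\<close>.\<close>
definition inc_beta :: "real \<Rightarrow> real \<Rightarrow> real" where
  "inc_beta b z = z powr b * hyp2F1 b b (1 + b) z"

lemma inc_beta_deriv:
  assumes "b > 0" "0 < z" "z < 1"
  shows "(inc_beta b has_real_derivative b * z powr (b - 1) * (1 - z) powr (- b)) (at z)"
proof -
  obtain F' where F': "((\<lambda>z. hyp2F1 b b (1 + b) z) has_real_derivative F') (at z)"
    and ode: "b * hyp2F1 b b (1 + b) z + z * F' = b * (1 - z) powr (- b)"
    using hyp2F1_diag_ode[of b z] assms by auto
  have D: "(inc_beta b has_real_derivative b * z powr (b - 1) * hyp2F1 b b (1 + b) z + z powr b * F') (at z)"
    unfolding inc_beta_def[abs_def] by (rule derivative_eq_intros F' refl | use assms in simp)+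
  have "b * z powr (b - 1) * hyp2F1 b b (1 + b) z + z powr b * F'
      = z powr (b - 1) * (b * hyp2F1 b b (1 + b) z + z * F')"
    using assms by (simp add: powr_diff field_simps)
  also have "\<dots> = b * z powr (b - 1) * (1 - z) powr (- b)"
    unfolding ode by simp
  finally show ?thesis using D by simp
qed

lemma inc_beta_nonneg: "b > 0 \<Longrightarrow> 0 \<le> z \<Longrightarrow> z < 1 \<Longrightarrow> inc_beta b z \<ge> 0"
  unfolding inc_beta_def by (simp add: hyp2F1_diag_nonneg)

lemma tendsto_inc_beta_0:
  assumes "b > 0" "(f \<longlongrightarrow> 0) F" "eventually (\<lambda>x. 0 \<le> f x) F"
  shows "((\<lambda>x. inc_beta b (f x)) \<longlongrightarrow> 0) F"
proof -
  have "((\<lambda>x. f x powr b) \<longlongrightarrow> 0) F"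
    by (rule tendsto_zero_powrI[OF assms(2) tendsto_const assms(3) assms(1)])
  moreover have "((\<lambda>x. hyp2F1 b b (1 + b) (f x)) \<longlongrightarrow> hyp2F1 b b (1 + b) 0) F"
    by (rule isCont_tendsto_compose[OF isCont_hyp2F1_diag assms(2)]) (use assms in auto)
  ultimately show ?thesis
    unfolding inc_beta_def using tendsto_mult by fastforce
qed

lemma inc_beta_unbounded:
  assumes "b \<ge> 1"
  obtains z where "0 < z" "z < 1" "inc_beta b z > M"
proof -
  define q :: real where "q = (1 / 2) powr b"
  have q: "q > 0" by (simp add: q_def)
  have "eventually (\<lambda>N. harm N > 2 * \<bar>M\<bar> / q) sequentially"
    using harm_at_top by (simp add: filterlim_at_top_dense)
  then obtain N0 where "\<forall>N\<ge>N0. harm N > 2 * \<bar>M\<bar> / q"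
    unfolding eventually_sequentially by blast
  then have "harm (Suc N0) > 2 * \<bar>M\<bar> / q"
    by simp
  then obtain N where N: "harm N > 2 * \<bar>M\<bar> / q" "N > 0"
    by blast
  define z where "z = (1 / 2 :: real) powr (1 / real N)"
  have z: "0 < z" "z < 1"
    using N(2) powr_less_mono2[of "1 / real N" "1 / 2" 1] by (auto simp: z_def)
  have "z ^ N = z powr real N"
    using z by (simp add: powr_realpow)
  also have "\<dots> = 1 / 2"
    using N(2) by (simp add: z_def powr_powr)
  finally have zN: "z ^ N = 1 / 2" .
  have "1 / 2 \<le> z"
    using power_decreasing[of 1 N z] z N(2) zN by simp
  then have "q \<le> z powr b"
    unfolding q_def using assms by (intro powr_mono2) auto
  moreover have "1 / 2 * harm N \<le> hyp2F1 b b (1 + b) z"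
    using hyp2F1_diag_ge_harm[OF assms z, of N] zN by simp
  ultimately have "q * (1 / 2 * harm N) \<le> inc_beta b z"
    unfolding inc_beta_def by (rule mult_mono) (auto simp: harm_nonneg)
  moreover have "\<bar>M\<bar> < q * (1 / 2 * harm N)"
  proof -
    have "\<bar>M\<bar> = q * (1 / 2 * (2 * \<bar>M\<bar> / q))"
      using q by simp
    also have "\<dots> < q * (1 / 2 * harm N)"
      using N(1) q by (intro mult_strict_left_mono) auto
    finally show ?thesis .
  qed
  ultimately show ?thesis
    using that[OF z] abs_ge_self[of M] by linarith
qed

lemma inc_beta_surj:
  assumes "b \<ge> 1" "y > 0"
  obtains z where "0 < z" "z < 1" "inc_beta b z = y"
proof -
  obtain z1 where z1: "0 < z1" "z1 < 1" "inc_beta b z1 > y"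
    using inc_beta_unbounded[OF assms(1)] .
  have "(inc_beta b \<longlongrightarrow> 0) (at_right 0)"
    using tendsto_inc_beta_0[of b "\<lambda>x. x" "at_right 0"] assms
    by (simp add: eventually_at_right_less[THEN eventually_mono] tendsto_ident_at) 
  then have "eventually (\<lambda>x. inc_beta b x < y) (at_right 0)"
    using assms(2) by (rule order_tendstoD)
  then obtain e where e: "e > 0" "\<And>x. x > 0 \<Longrightarrow> x < e \<Longrightarrow> inc_beta b x < y"
    by (auto simp: eventually_at_right_field)
  define z2 where "z2 = min (e / 2) (z1 / 2)"
  have z2: "0 < z2" "z2 < z1" "inc_beta b z2 < y"
    using e z1 by (auto simp: z2_def intro!: e(2))
  have "continuous_on {z2..z1} (inc_beta b)"
    using z1 z2 assms by (intro continuous_at_imp_continuous_on ballI DERIV_isCont[OF inc_beta_deriv]) auto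
  then obtain z where z: "z2 \<le> z" "z \<le> z1" "inc_beta b z = y"
    using IVT'[of "inc_beta b" z2 y z1] z1 z2 by auto
  show ?thesis
    by (rule that[OF _ _ z(3)]) (use z z1 z2 in auto)
qed

section \<open>Integrals along consumption paths\<close>

lemma tendsto_exp_neg_mult_at_top:
  fixes r :: real
  assumes "r > 0"
  shows "((\<lambda>t. exp (- (r * t))) \<longlongrightarrow> 0) at_top"
proof -
  have "filterlim (\<lambda>t. r * t) at_top at_top"
    by (rule filterlim_tendsto_pos_mult_at_top[OF tendsto_const assms filterlim_ident])
  then have "filterlim (\<lambda>t. - (r * t)) at_bot at_top"
    by (simp add: filterlim_uminus_at_bot)
  then show ?thesis
    by (rule filterlim_compose[OF exp_at_bot])
qed

lemma borel_measurable_LBINT_0: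
  fixes f :: "real \<Rightarrow> real"
  assumes [measurable]: "f \<in> borel_measurable borel"
  shows "(\<lambda>s::real. LBINT t=0..s. f t) \<in> borel_measurable borel"
proof -
  have "(\<lambda>s::real. LBINT t=0..s. f t) = (\<lambda>s. if 0 \<le> s
      then (\<integral>t. indicator {t. 0 < t \<and> t < s} t * f t \<partial>lborel)
      else - (\<integral>t. indicator {t. s < t \<and> t < 0} t * f t \<partial>lborel))"
    by (auto simp: interval_lebesgue_integral_def set_lebesgue_integral_def einterval_def fun_eq_iff)
  also have "\<dots> \<in> borel_measurable borel"
    by measurable
  finally show ?thesis .
qed

lemma LBINT_0_eq_integral_Icc:
  fixes f :: "real \<Rightarrow> real" and s :: real
  shows "0 \<le> s \<Longrightarrow> (LBINT t=0..s. f t) = (\<integral>t. indicator {0..s} t * f t \<partial>lborel)"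
  using interval_integral_Icc[of 0 s f] by (simp add: set_lebesgue_integral_def zero_ereal_def)

lemma ennreal_LBINT_0:
  fixes f :: "real \<Rightarrow> real"
  assumes "set_integrable lborel {0..s} f" "\<And>t. 0 \<le> t \<Longrightarrow> t \<le> s \<Longrightarrow> 0 \<le> f t" "0 \<le> s"
  shows "ennreal (LBINT t=0..s. f t) = (\<integral>\<^sup>+ t. ennreal (f t) * indicator {0..s} t \<partial>lborel)"
proof -
  have "integrable lborel (\<lambda>t. indicator {0..s} t * f t)"
    using assms(1) by (simp add: set_integrable_def)
  then have "(\<integral>\<^sup>+ t. ennreal (indicator {0..s} t * f t) \<partial>lborel)
      = ennreal (\<integral>t. indicator {0..s} t * f t \<partial>lborel)"
    by (rule nn_integral_eq_integral) (use assms(2) in \<open>auto split: split_indicator\<close>)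
  moreover have "(\<lambda>t. ennreal (indicator {0..s} t * f t)) = (\<lambda>t. ennreal (f t) * indicator {0..s} t)"
    by (auto simp: fun_eq_iff split: split_indicator)
  ultimately show ?thesis
    using LBINT_0_eq_integral_Icc[OF assms(3), of f] by simp
qed

lemma nn_integral_add_Ici:
  fixes f g :: "real \<Rightarrow> real"
  assumes [measurable]: "f \<in> borel_measurable borel" "g \<in> borel_measurable borel"
    and "\<And>s. 0 \<le> s \<Longrightarrow> 0 \<le> f s" "\<And>s. 0 \<le> s \<Longrightarrow> 0 \<le> g s"
  shows "(\<integral>\<^sup>+ s. ennreal (f s + g s) * indicator {0..} s \<partial>lborel)
    = (\<integral>\<^sup>+ s. ennreal (f s) * indicator {0..} s \<partial>lborel) + (\<integral>\<^sup>+ s. ennreal (g s) * indicator {0..} s \<partial>lborel)"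
proof -
  have "(\<integral>\<^sup>+ s. ennreal (f s + g s) * indicator {0..} s \<partial>lborel)
      = (\<integral>\<^sup>+ s. ennreal (f s) * indicator {0..} s + ennreal (g s) * indicator {0..} s \<partial>lborel)"
    using assms(3,4) by (intro nn_integral_cong) (auto simp: ennreal_plus split: split_indicator)
  also have "\<dots> = (\<integral>\<^sup>+ s. ennreal (f s) * indicator {0..} s \<partial>lborel) + (\<integral>\<^sup>+ s. ennreal (g s) * indicator {0..} s \<partial>lborel)"
    by (rule nn_integral_add) auto
  finally show ?thesis .
qed

lemma LBINT_0_nonneg:
  fixes f :: "real \<Rightarrow> real"
  assumes "0 \<le> s" "\<And>t. 0 \<le> t \<Longrightarrow> t \<le> s \<Longrightarrow> 0 \<le> f t"
  shows "0 \<le> (LBINT t=0..s. f t)"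
  unfolding LBINT_0_eq_integral_Icc[OF assms(1)]
  by (rule Bochner_Integration.integral_nonneg) (use assms(2) in \<open>auto split: split_indicator\<close>)

lemma LBINT_0_FTC:
  fixes f F :: "real \<Rightarrow> real"
  assumes "0 \<le> t" "continuous_on {0..t} f" "\<And>x. 0 \<le> x \<Longrightarrow> (F has_real_derivative f x) (at x)"
  shows "(LBINT x=0..t. f x) = F t - F 0"
proof -
  have "(LBINT x=ereal 0..t. f x) = F t - F 0"
  proof (rule interval_integral_FTC_finite)
    show "continuous_on {min 0 t..max 0 t} f"
      using assms(1,2) by simp
    fix x assume "min 0 t \<le> x" "x \<le> max 0 t"
    then have "(F has_real_derivative f x) (at x)"
      using assms(1,3) by simp
    then show "(F has_vector_derivative f x) (at x within {min 0 t..max 0 t})"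
      unfolding has_real_derivative_iff_has_vector_derivative by (rule has_vector_derivative_at_within)
  qed
  then show ?thesis by (simp add: zero_ereal_def)
qed

lemma set_integrable_powr:
  fixes \<gamma> :: "real \<Rightarrow> real"
  assumes [measurable]: "\<gamma> \<in> borel_measurable borel" and nonneg: "\<And>t. 0 \<le> t \<Longrightarrow> 0 \<le> \<gamma> t"
    and "set_integrable lborel {0..s} \<gamma>" and k: "0 \<le> k" "k \<le> 1"
  shows "set_integrable lborel {0..s} (\<lambda>t. \<gamma> t powr k)"
proof (rule set_integrable_bound)
  have "set_integrable lborel {0..s} (\<lambda>t. 1 :: real)"
    by (simp add: set_integrable_def integrable_real_indicator emeasure_lborel_Icc_eq)
  then show "set_integrable lborel {0..s} (\<lambda>t. 1 + \<gamma> t)"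
    using assms(3) by (rule set_integral_add)
  show "set_borel_measurable lborel {0..s} (\<lambda>t. \<gamma> t powr k)"
    unfolding set_borel_measurable_def by measurable
  show "AE t in lborel. t \<in> {0..s} \<longrightarrow> norm (\<gamma> t powr k) \<le> norm (1 + \<gamma> t)"
  proof (intro AE_I2 impI)
    fix t assume "t \<in> {0..s}"
    then have g: "0 \<le> \<gamma> t" using nonneg by auto
    have "\<gamma> t powr k \<le> max 1 (\<gamma> t)"
    proof (cases "\<gamma> t \<le> 1")
      case True
      then show ?thesis using g k by (simp add: powr_le1)
    next
      case False
      then have "\<gamma> t powr k \<le> \<gamma> t powr 1" using k by (intro powr_mono) auto
      then show ?thesis using False by simp
    qed
    then show "norm (\<gamma> t powr k) \<le> norm (1 + \<gamma> t)" using g by simp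
  qed
qed

lemma Youngs_inequality_nonneg:
  fixes g h k :: real
  assumes "0 \<le> g" "0 < h" "0 < k" "k < 1"
  shows "g powr k * h powr (1 - k) \<le> k * g + (1 - k) * h"
  using Youngs_inequality_0[of k "1 - k" g h] assms by (cases "g = 0") auto

text \<open>The density \<open>l exp (- l s)\<close> of \<open>\<tau>\<close> and the term \<open>c s\<close> of \<open>\<integral>\<^sub>0\<^sup>s u\<close> are absorbed into
  the exponent (see \<open>objective_eq_expected_disutility\<close>).\<close>
definition expected_disutility :: "real \<Rightarrow> real \<Rightarrow> real \<Rightarrow> real \<Rightarrow> (real \<Rightarrow> real) \<Rightarrow> ennreal" where
  "expected_disutility a k c l \<gamma> =
     (\<integral>\<^sup>+ s. ennreal (l * exp (- (c + l) * s - a * (LBINT t=0..s. \<gamma> t powr k))) * indicator {0..} s \<partial>lborel)"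

lemma LBINT_util:
  fixes \<gamma> :: "real \<Rightarrow> real"
  assumes [measurable]: "\<gamma> \<in> borel_measurable borel" and nonneg: "\<And>t. 0 \<le> t \<Longrightarrow> 0 \<le> \<gamma> t"
    and int: "set_integrable lborel {0..s} \<gamma>" and k: "0 \<le> k" "k \<le> 1" and s: "0 \<le> s"
  shows "(LBINT t=0..s. util a k c (\<gamma> t)) = a * (LBINT t=0..s. \<gamma> t powr k) + c * s"
proof -
  have "integrable lborel (\<lambda>t. indicator {0..s} t * \<gamma> t powr k)"
    using set_integrable_powr[OF assms(1) nonneg int k] by (simp add: set_integrable_def)
  moreover have "integrable lborel (\<lambda>t. indicator {0..s} t * c :: real)"
    by (intro integrable_mult_left integrable_real_indicator) (auto simp: emeasure_lborel_Icc_eq)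
  ultimately have "(\<integral>t. a * (indicator {0..s} t * \<gamma> t powr k) + indicator {0..s} t * c \<partial>lborel)
      = a * (\<integral>t. indicator {0..s} t * \<gamma> t powr k \<partial>lborel) + c * s"
    using s by (simp add: mult.commute)
  moreover have "(LBINT t=0..s. util a k c (\<gamma> t))
      = (\<integral>t. a * (indicator {0..s} t * \<gamma> t powr k) + indicator {0..s} t * c \<partial>lborel)"
    unfolding LBINT_0_eq_integral_Icc[OF s] util_def
    by (intro Bochner_Integration.integral_cong) (auto simp: algebra_simps)
  ultimately show ?thesis
    unfolding LBINT_0_eq_integral_Icc[OF s] by simp
qed

lemma objective_eq_expected_disutility:
  fixes \<gamma> :: "real \<Rightarrow> real"
  assumes adm: "admissible x \<gamma>" and k: "0 \<le> k" "k \<le> 1" and l: "0 < l"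
  shows "objective a k c l \<gamma> = - enn2real (expected_disutility a k c l \<gamma>)"
proof -
  have [measurable]: "\<gamma> \<in> borel_measurable borel" and nonneg: "\<And>t. 0 \<le> t \<Longrightarrow> 0 \<le> \<gamma> t"
    and int: "\<And>s. 0 \<le> s \<Longrightarrow> set_integrable lborel {0..s} \<gamma>"
    using adm unfolding admissible_def by auto
  have [measurable]: "(\<lambda>s::real. LBINT t=0..s. util a k c (\<gamma> t)) \<in> borel_measurable borel"
    "(\<lambda>s::real. LBINT t=0..s. \<gamma> t powr k) \<in> borel_measurable borel"
    by (rule borel_measurable_LBINT_0, simp add: util_def)+
  define h where "h s = indicator {0..} s * (l * exp (- (c + l) * s - a * (LBINT t=0..s. \<gamma> t powr k)))" for s
  have [measurable]: "h \<in> borel_measurable borel"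
    unfolding h_def by measurable
  have "objective a k c l \<gamma>
      = (\<integral>s. exponential_density l s * - exp (- (LBINT t=0..s. util a k c (\<gamma> t))) \<partial>lborel)"
    unfolding objective_def by (subst integral_density) (auto simp: exponential_density_nonneg l)
  also have "\<dots> = (\<integral>s. - h s \<partial>lborel)"
  proof (intro Bochner_Integration.integral_cong refl)
    fix s :: real
    show "exponential_density l s * - exp (- (LBINT t=0..s. util a k c (\<gamma> t))) = - h s"
    proof (cases "0 \<le> s")
      case True
      then show ?thesis
        by (simp add: exponential_density_def h_def LBINT_util[OF _ nonneg int[OF True] k True]
            flip: exp_add) (simp add: algebra_simps)
    qed (simp add: exponential_density_def h_def)
  qed
  also have "\<dots> = - enn2real (\<integral>\<^sup>+ s. ennreal (h s) \<partial>lborel)"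
    by (simp add: integral_eq_nn_integral h_def l less_imp_le)
  also have "(\<lambda>s. ennreal (h s)) = (\<lambda>s. ennreal (l * exp (- (c + l) * s - a * (LBINT t=0..s. \<gamma> t powr k))) * indicator {0..} s)"
    by (auto simp: h_def fun_eq_iff split: split_indicator)
  finally show ?thesis
    unfolding expected_disutility_def .
qed

lemma expected_disutility_le:
  fixes \<gamma> :: "real \<Rightarrow> real"
  assumes "a \<ge> 0" "c + l > 0" "l > 0"
  shows "expected_disutility a k c l \<gamma> \<le> ennreal (l / (c + l))"
proof -
  have "expected_disutility a k c l \<gamma> \<le> (\<integral>\<^sup>+ s. ennreal (l * exp (- (c + l) * s)) * indicator {0..} s \<partial>lborel)"
    unfolding expected_disutility_def
  proof (intro nn_integral_mono)
    fix s :: real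
    show "ennreal (l * exp (- (c + l) * s - a * (LBINT t=0..s. \<gamma> t powr k))) * indicator {0..} s
        \<le> ennreal (l * exp (- (c + l) * s)) * indicator {0..} s"
    proof (cases "0 \<le> s")
      case True
      then have "0 \<le> a * (LBINT t=0..s. \<gamma> t powr k)"
        using LBINT_0_nonneg[OF True, of "\<lambda>t. \<gamma> t powr k"] assms(1) by simp
      then show ?thesis
        using assms by (intro mult_right_mono ennreal_leI) auto
    qed simp
  qed
  also have "\<dots> = ennreal (0 - (- l / (c + l) * exp (- (c + l) * 0)))"
  proof (rule nn_integral_FTC_atLeast)
    fix x :: real
    have "((\<lambda>s. - l / (c + l) * exp (- (c + l) * s))
        has_real_derivative - l / (c + l) * (exp (- (c + l) * x) * (- (c + l)))) (at x)"
      by (intro DERIV_cmult DERIV_chain2[OF DERIV_exp]) (rule derivative_eq_intros refl | simp)+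
    moreover have "- l / (c + l) * (exp (- (c + l) * x) * (- (c + l))) = l * exp (- (c + l) * x)"
      using assms by (simp add: field_simps)
    ultimately show "((\<lambda>s. - l / (c + l) * exp (- (c + l) * s)) has_real_derivative l * exp (- (c + l) * x)) (at x)"
      by simp
    show "0 \<le> l * exp (- (c + l) * x)"
      using assms by simp
  next
    show "((\<lambda>s. - l / (c + l) * exp (- (c + l) * s)) \<longlongrightarrow> 0) at_top"
      using tendsto_mult_right_zero[OF tendsto_exp_neg_mult_at_top[OF assms(2)], of "- l / (c + l)"]
      by (simp only: mult_minus_left)
  qed simp
  finally show ?thesis by simp
qed

lemma nn_integral_admissible_le:
  fixes \<gamma> :: "real \<Rightarrow> real"
  assumes adm: "admissible x \<gamma>"
  shows "(\<integral>\<^sup>+ t. ennreal (\<gamma> t) * indicator {0..} t \<partial>lborel) \<le> ennreal x"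
proof -
  have [measurable]: "\<gamma> \<in> borel_measurable borel" and nonneg: "\<And>t. 0 \<le> t \<Longrightarrow> 0 \<le> \<gamma> t"
    and int: "\<And>s. 0 \<le> s \<Longrightarrow> set_integrable lborel {0..s} \<gamma>"
    and wealth: "\<And>s. 0 \<le> s \<Longrightarrow> (LBINT t=0..s. \<gamma> t) \<le> x"
    using adm unfolding admissible_def by auto
  let ?f = "\<lambda>(i::nat) t. ennreal (\<gamma> t) * indicator {0..real i} t"
  have "(SUP i. ?f i t) = ennreal (\<gamma> t) * indicator {0..} t" for t
  proof (rule LIMSEQ_unique[OF LIMSEQ_SUP])
    obtain n where "t < real n"
      using reals_Archimedean2[of t] ..
    then have "eventually (\<lambda>i. ?f i t = ennreal (\<gamma> t) * indicator {0..} t) sequentially"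
      by (auto simp: frequently_def intro!: eventually_sequentiallyI[where c = n] split: split_indicator)
    then show "(\<lambda>i. ?f i t) \<longlonglongrightarrow> ennreal (\<gamma> t) * indicator {0..} t"
      by (rule tendsto_eventually)
  qed (auto simp: incseq_def le_fun_def split: split_indicator)
  then have "(\<integral>\<^sup>+ t. ennreal (\<gamma> t) * indicator {0..} t \<partial>lborel) = (\<integral>\<^sup>+ t. (SUP i. ?f i t) \<partial>lborel)"
    by simp
  also have "\<dots> = (SUP i. (\<integral>\<^sup>+ t. ?f i t \<partial>lborel))"
    by (rule nn_integral_monotone_convergence_SUP) (auto simp: incseq_def le_fun_def split: split_indicator)
  also have "\<dots> \<le> ennreal x"
  proof (rule SUP_least)
    fix i :: nat
    have "(\<integral>\<^sup>+ t. ?f i t \<partial>lborel) = ennreal (LBINT t=0..real i. \<gamma> t)"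
      by (rule ennreal_LBINT_0[symmetric]) (use int nonneg in auto)
    then show "(\<integral>\<^sup>+ t. ?f i t \<partial>lborel) \<le> ennreal x"
      using wealth[of "real i"] by (simp add: ennreal_leI)
  qed
  finally show ?thesis .
qed

section \<open>The candidate optimum\<close>

lemma powr_divide_eq_mult:
  fixes x y r :: real
  assumes "0 < x" "0 < y"
  shows "(x / y) powr r = x powr r * y powr (- r)"
proof -
  have "(x / y) powr r = x powr r / y powr r"
    using assms by (simp add: powr_divide)
  then show ?thesis
    by (simp add: powr_minus divide_inverse)
qed

text \<open>The candidate optimum, parametrised by \<open>z0 = w0 / l \<in> (0, 1)\<close> instead of the initial
  wealth \<open>wealth 0\<close>; along it \<open>zeta t = z0 exp (k t (c + l) / (k - 1))\<close> is the paper's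
  \<open>w0 exp (k t (c + l) / (k - 1)) / l\<close>. The function \<open>cum_util t\<close> is \<open>\<integral>\<^sub>0\<^sup>t consumption\<^sup>k\<close>,
  \<open>discount\<close> is the integrand of \<open>expected_disutility\<close> along the candidate, and
  \<open>costate t = l \<integral>\<^sub>t\<^sup>\<infinity> discount\<close>.\<close>
locale consumption_candidate =
  fixes a k c l z0 :: real
  assumes a_pos: "a > 0" and k_pos: "0 < k" and k_less_1: "k < 1" and l_pos: "l > 0"
    and cl_pos: "c + l > 0" and z0_pos: "0 < z0" and z0_less_1: "z0 < 1"
begin

definition "b = 1 / k"
definition "rho = c + l"
definition "beta = k * rho / (1 - k)"
definition "zeta t = z0 * exp (- beta * t)"
definition "consumption_coeff = (1 - k) powr (- b) * a powr (- b) * rho powr b"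
definition "consumption t = consumption_coeff * (zeta t / (1 - zeta t)) powr b"
definition "policy t = (if 0 \<le> t then consumption t else 0)"
definition "wealth_coeff = (1 - k) powr (1 - b) * a powr (- b) * rho powr (b - 1)"
definition "wealth t = wealth_coeff * inc_beta b (zeta t)"
definition "cum_util t = b * ln ((1 - zeta t) / (1 - z0)) / a"
definition "discount t = exp (- rho * t) * ((1 - zeta t) / (1 - z0)) powr (- b)"
definition "costate t = l / rho * exp (- rho * t) * (1 - z0) powr b * (1 - zeta t) powr (1 - b)"
definition "multiplier = a * l / rho * (1 - z0) powr b / (consumption_coeff powr (1 - k) * z0 powr (b - 1))"

lemma b_gt_1: "b > 1"
  unfolding b_def using k_pos k_less_1 by simp

lemma b_mult_k: "b * k = 1"
  unfolding b_def using k_pos by simp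

lemma rho_pos: "rho > 0"
  unfolding rho_def using cl_pos by simp

lemma beta_pos: "beta > 0"
  unfolding beta_def using k_pos k_less_1 rho_pos by simp

lemma b_mult_beta: "b * beta = rho / (1 - k)"
  unfolding beta_def using b_mult_k k_less_1 by (simp add: field_simps)

lemma b_minus_1_mult_beta: "(b - 1) * beta = rho"
  unfolding beta_def using b_mult_k k_pos k_less_1 by (simp add: field_simps)

lemma zeta_pos: "zeta t > 0"
  unfolding zeta_def using z0_pos by simp

lemma zeta_le_z0: "t \<ge> 0 \<Longrightarrow> zeta t \<le> z0"
  unfolding zeta_def using z0_pos beta_pos by (simp add: mult_le_cancel_left1)

lemma zeta_less_1: "t \<ge> 0 \<Longrightarrow> zeta t < 1"
  using zeta_le_z0[of t] z0_less_1 by simp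

lemma zeta_0: "zeta 0 = z0"
  by (simp add: zeta_def)

lemma zeta_deriv: "(zeta has_real_derivative (- beta * zeta t)) (at t)"
  unfolding zeta_def[abs_def] by (rule derivative_eq_intros refl | simp)+

lemma zeta_tendsto_0: "(zeta \<longlongrightarrow> 0) at_top"
  unfolding zeta_def[abs_def]
  using tendsto_mult_right_zero[OF tendsto_exp_neg_mult_at_top[OF beta_pos], of z0] by simp

lemma consumption_coeff_pos: "consumption_coeff > 0"
  unfolding consumption_coeff_def using k_less_1 a_pos rho_pos by simp

lemma wealth_coeff_pos: "wealth_coeff > 0"
  unfolding wealth_coeff_def using k_less_1 a_pos rho_pos by simp

lemma wealth_coeff_mult: "wealth_coeff * b * beta = consumption_coeff"
proof -
  have "(1 - k) powr (1 - b) = (1 - k) * (1 - k) powr (- b)"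
    using powr_add[of "1 - k" 1 "- b"] k_less_1 by simp
  moreover have "rho powr (b - 1) = rho powr b / rho"
    using rho_pos by (simp add: powr_diff)
  ultimately have "wealth_coeff * rho = (1 - k) * consumption_coeff"
    unfolding wealth_coeff_def consumption_coeff_def using rho_pos by simp
  moreover have "wealth_coeff * b * beta = wealth_coeff * rho / (1 - k)"
    using b_mult_beta by (simp add: mult.assoc)
  ultimately show ?thesis
    using k_less_1 by simp
qed

lemma consumption_coeff_powr_k: "consumption_coeff powr k = rho / ((1 - k) * a)"
proof -
  have "consumption_coeff powr k = (1 - k) powr (- b * k) * a powr (- b * k) * rho powr (b * k)"
    unfolding consumption_coeff_def using k_less_1 a_pos rho_pos by (simp add: powr_mult powr_powr)
  also have "\<dots> = rho / ((1 - k) * a)"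
    using b_mult_k k_less_1 a_pos rho_pos by (simp add: powr_minus field_simps)
  finally show ?thesis .
qed

lemma consumption_pos: "t \<ge> 0 \<Longrightarrow> consumption t > 0"
  unfolding consumption_def using consumption_coeff_pos zeta_pos[of t] zeta_less_1[of t] by simp

lemma consumption_eq:
  assumes "t \<ge> 0"
  shows "consumption t = consumption_coeff * zeta t powr b * (1 - zeta t) powr (- b)"
  unfolding consumption_def using zeta_pos[of t] zeta_less_1[OF assms]
  by (simp add: powr_divide_eq_mult mult.assoc)

lemma consumption_powr_k:
  assumes "t \<ge> 0"
  shows "consumption t powr k = rho / ((1 - k) * a) * (zeta t / (1 - zeta t))"
proof -
  have "consumption t powr k = consumption_coeff powr k * (zeta t / (1 - zeta t))"
    unfolding consumption_def using consumption_coeff_pos b_mult_k zeta_pos[of t] zeta_less_1[OF assms]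
    by (simp add: powr_mult powr_powr)
  then show ?thesis
    using consumption_coeff_powr_k by simp
qed

lemma isCont_consumption: "t \<ge> 0 \<Longrightarrow> isCont consumption t"
  unfolding consumption_def[abs_def] using zeta_pos[of t] zeta_less_1[of t]
  by (intro continuous_intros DERIV_isCont[OF zeta_deriv]) auto

lemma wealth_deriv:
  assumes "t \<ge> 0"
  shows "(wealth has_real_derivative - consumption t) (at t)"
proof -
  have z: "0 < zeta t" "zeta t < 1"
    using zeta_pos zeta_less_1 assms by auto
  have D: "(wealth has_real_derivative
      wealth_coeff * ((b * zeta t powr (b - 1) * (1 - zeta t) powr (- b)) * (- beta * zeta t))) (at t)"
    unfolding wealth_def[abs_def]
    by (intro DERIV_cmult DERIV_chain2[OF inc_beta_deriv zeta_deriv]) (use z b_gt_1 in auto)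
  have zb: "zeta t powr (b - 1) * zeta t = zeta t powr b"
    using z by (simp add: powr_diff)
  have "wealth_coeff * ((b * zeta t powr (b - 1) * (1 - zeta t) powr (- b)) * (- beta * zeta t))
      = - ((wealth_coeff * b * beta) * (zeta t powr (b - 1) * zeta t) * (1 - zeta t) powr (- b))"
    by (simp add: algebra_simps)
  also have "\<dots> = - consumption t"
    unfolding wealth_coeff_mult zb consumption_eq[OF assms] ..
  finally show ?thesis
    using D by simp
qed

lemma wealth_0: "wealth 0 = wealth_coeff * inc_beta b z0"
  by (simp add: wealth_def zeta_0)

lemma wealth_nonneg: "t \<ge> 0 \<Longrightarrow> wealth t \<ge> 0"
  unfolding wealth_def
  using wealth_coeff_pos inc_beta_nonneg[of b "zeta t"] b_gt_1 zeta_pos[of t] zeta_less_1[of t] by simp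

lemma wealth_tendsto_0: "(wealth \<longlongrightarrow> 0) at_top"
proof -
  have "((\<lambda>t. inc_beta b (zeta t)) \<longlongrightarrow> 0) at_top"
    by (rule tendsto_inc_beta_0) (use b_gt_1 zeta_tendsto_0 zeta_pos in \<open>auto intro: always_eventually less_imp_le\<close>)
  then show ?thesis
    unfolding wealth_def[abs_def] by (rule tendsto_mult_right_zero)
qed

lemma cum_util_0: "cum_util 0 = 0"
  by (simp add: cum_util_def zeta_0)

lemma cum_util_deriv:
  assumes "t \<ge> 0"
  shows "(cum_util has_real_derivative consumption t powr k) (at t)"
proof -
  have z: "0 < zeta t" "zeta t < 1"
    using zeta_pos zeta_less_1 assms by auto
  have "(cum_util has_real_derivative
      b * (inverse ((1 - zeta t) / (1 - z0)) * ((0 - (- beta * zeta t)) / (1 - z0))) / a) (at t)"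
    unfolding cum_util_def[abs_def]
    by (intro DERIV_cdivide DERIV_cmult DERIV_chain2[OF DERIV_ln] DERIV_diff DERIV_const zeta_deriv)
      (use z z0_less_1 in simp)
  moreover have "b * (inverse ((1 - zeta t) / (1 - z0)) * ((0 - (- beta * zeta t)) / (1 - z0))) / a
      = (b * beta) / a * (zeta t / (1 - zeta t))"
  proof -
    have n: "1 - zeta t \<noteq> 0" "1 - z0 \<noteq> 0"
      using z z0_less_1 by auto
    have "inverse ((1 - zeta t) / (1 - z0)) * ((0 - (- beta * zeta t)) / (1 - z0))
        = ((1 - z0) / (1 - zeta t)) * ((beta * zeta t) / (1 - z0))"
      by (simp add: inverse_divide)
    also have "\<dots> = beta * zeta t / (1 - zeta t)"
      using n by simp
    finally show ?thesis
      by (simp add: ac_simps)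
  qed
  ultimately show ?thesis
    using consumption_powr_k[OF assms] b_mult_beta by simp
qed

lemma discount_eq:
  assumes "t \<ge> 0"
  shows "exp (- rho * t - a * cum_util t) = discount t"
proof -
  have "exp (- b * ln ((1 - zeta t) / (1 - z0))) = ((1 - zeta t) / (1 - z0)) powr (- b)"
    using zeta_less_1[OF assms] z0_less_1 by (simp add: powr_def)
  moreover have "a * cum_util t = b * ln ((1 - zeta t) / (1 - z0))"
    unfolding cum_util_def using a_pos by simp
  ultimately show ?thesis
    unfolding discount_def by (simp add: exp_diff exp_minus divide_inverse)
qed

lemma discount_pos: "t \<ge> 0 \<Longrightarrow> discount t > 0"
  unfolding discount_def using z0_less_1 zeta_less_1[of t] by (simp add: powr_def)

lemma costate_nonneg: "costate t \<ge> 0"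
  unfolding costate_def using l_pos rho_pos by simp

lemma costate_0: "costate 0 = l / rho * (1 - z0)"
proof -
  have "(1 - z0) powr b * (1 - z0) powr (1 - b) = 1 - z0"
    using z0_less_1 by (simp flip: powr_add)
  then show ?thesis
    unfolding costate_def zeta_0 by (simp add: mult.assoc)
qed

lemma costate_tendsto_0: "(costate \<longlongrightarrow> 0) at_top"
proof -
  have "((\<lambda>t. (1 - zeta t) powr (1 - b)) \<longlongrightarrow> (1 - 0) powr (1 - b)) at_top"
    by (intro tendsto_powr tendsto_diff tendsto_const zeta_tendsto_0) simp
  then have "((\<lambda>t. l / rho * exp (- (rho * t)) * (1 - z0) powr b * (1 - zeta t) powr (1 - b))
      \<longlongrightarrow> l / rho * 0 * (1 - z0) powr b * (1 - 0) powr (1 - b)) at_top"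
    by (intro tendsto_mult tendsto_const tendsto_exp_neg_mult_at_top rho_pos)
  then show ?thesis
    by (simp add: costate_def[abs_def])
qed

lemma costate_deriv:
  assumes "t \<ge> 0"
  shows "(costate has_real_derivative - l * discount t) (at t)"
proof -
  have z: "0 < zeta t" "zeta t < 1"
    using zeta_pos zeta_less_1 assms by auto
  define K where "K = l / rho * (1 - z0) powr b"
  have costate_K: "costate = (\<lambda>t. K * (exp (- rho * t) * (1 - zeta t) powr (1 - b)))"
    by (simp add: costate_def K_def fun_eq_iff)
  have dE: "((\<lambda>t. exp (- rho * t)) has_real_derivative exp (- rho * t) * (- rho)) (at t)"
    by (rule DERIV_chain2[OF DERIV_exp]) (rule derivative_eq_intros refl | simp)+
  have dW: "((\<lambda>t. (1 - zeta t) powr (1 - b)) has_real_derivative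
      (1 - b) * (1 - zeta t) powr (1 - b - of_nat 1) * (0 - (- beta * zeta t))) (at t)"
    by (intro DERIV_fun_powr DERIV_diff DERIV_const zeta_deriv) (use z in simp)
  have D: "(costate has_real_derivative K * (exp (- rho * t) * (- rho) * (1 - zeta t) powr (1 - b)
      + ((1 - b) * (1 - zeta t) powr (1 - b - of_nat 1) * (0 - (- beta * zeta t))) * exp (- rho * t))) (at t)"
    unfolding costate_K by (intro DERIV_cmult DERIV_mult dE dW)
  have w1: "(1 - zeta t) powr (1 - b) = (1 - zeta t) * (1 - zeta t) powr (- b)"
    using powr_add[of "1 - zeta t" 1 "- b"] z by simp
  have bb: "(1 - b) * beta = - rho"
    using b_minus_1_mult_beta by (simp add: algebra_simps)
  have "K * (exp (- rho * t) * (- rho) * (1 - zeta t) powr (1 - b)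
      + ((1 - b) * (1 - zeta t) powr (1 - b - of_nat 1) * (0 - (- beta * zeta t))) * exp (- rho * t))
      = K * exp (- rho * t) * (1 - zeta t) powr (- b) * (- rho * (1 - zeta t) + ((1 - b) * beta) * zeta t)"
    unfolding w1 by (simp add: algebra_simps)
  also have "\<dots> = - (K * rho) * exp (- rho * t) * (1 - zeta t) powr (- b)"
    unfolding bb by (simp add: algebra_simps)
  also have "\<dots> = - l * discount t"
    unfolding discount_def K_def using z z0_less_1 rho_pos by (simp add: powr_divide_eq_mult)
  finally show ?thesis
    using D by simp
qed

text \<open>The first-order condition: marginal felicity is proportional to the costate.\<close>
lemma costate_first_order:
  assumes "t \<ge> 0"
  shows "a * costate t = multiplier * consumption t powr (1 - k)"
proof -
  have z: "0 < zeta t" "zeta t < 1"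
    using zeta_pos zeta_less_1 assms by auto
  have "consumption t powr (1 - k)
      = consumption_coeff powr (1 - k) * (zeta t / (1 - zeta t)) powr (b - 1)"
    unfolding consumption_def using consumption_coeff_pos z b_mult_k
    by (simp add: powr_mult powr_powr algebra_simps)
  also have "(zeta t / (1 - zeta t)) powr (b - 1) = zeta t powr (b - 1) * (1 - zeta t) powr (1 - b)"
    using z by (simp add: powr_divide_eq_mult)
  also have "zeta t powr (b - 1) = z0 powr (b - 1) * exp (- rho * t)"
  proof -
    have "exp (- beta * t) powr (b - 1) = exp (- ((b - 1) * beta) * t)"
      by (simp add: powr_def algebra_simps)
    then show ?thesis
      unfolding zeta_def using z0_pos b_minus_1_mult_beta by (simp add: powr_mult)
  qed
  finally have "consumption t powr (1 - k)
      = consumption_coeff powr (1 - k) * z0 powr (b - 1) * exp (- rho * t) * (1 - zeta t) powr (1 - b)"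
    by simp
  moreover have "consumption_coeff powr (1 - k) * z0 powr (b - 1) > 0"
    using consumption_coeff_pos z0_pos by simp
  ultimately show ?thesis
    unfolding multiplier_def costate_def
    using consumption_coeff_pos a_pos l_pos rho_pos z0_pos z0_less_1 z by (simp add: field_simps)
qed

lemma multiplier_pos: "multiplier > 0"
  unfolding multiplier_def using a_pos l_pos rho_pos z0_pos z0_less_1 consumption_coeff_pos by simp

lemma consumption_measurable [measurable]: "consumption \<in> borel_measurable borel"
  unfolding consumption_def[abs_def] zeta_def[abs_def] by measurable

lemma policy_measurable [measurable]: "policy \<in> borel_measurable borel"
  unfolding policy_def[abs_def] by measurable

lemma discount_measurable [measurable]: "discount \<in> borel_measurable borel"
  unfolding discount_def[abs_def] zeta_def[abs_def] by measurable

lemma cum_util_measurable [measurable]: "cum_util \<in> borel_measurable borel"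
  unfolding cum_util_def[abs_def] zeta_def[abs_def] by measurable

lemma policy_nonneg: "policy t \<ge> 0"
  unfolding policy_def using consumption_pos[of t] by auto

lemma continuous_on_policy: "continuous_on {0..t} policy"
proof -
  have "continuous_on {0..t} consumption"
    by (rule continuous_at_imp_continuous_on) (auto intro: isCont_consumption)
  then show ?thesis
    by (rule continuous_on_cong[THEN iffD1, rotated 2]) (auto simp: policy_def)
qed

lemma set_integrable_policy: "set_integrable lborel {0..t} policy"
  unfolding set_integrable_def by (rule borel_integrable_compact[OF compact_Icc continuous_on_policy])

lemma policy_deriv: "0 \<le> x \<Longrightarrow> ((\<lambda>s. - wealth s) has_real_derivative policy x) (at x)"
  using wealth_deriv[of x] by (auto simp: policy_def intro: derivative_eq_intros)

lemma LBINT_policy: "0 \<le> t \<Longrightarrow> (LBINT s=0..t. policy s) = wealth 0 - wealth t"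
  using LBINT_0_FTC[of t policy "\<lambda>s. - wealth s"] continuous_on_policy policy_deriv by simp

lemma nn_integral_policy: "(\<integral>\<^sup>+ s. ennreal (policy s) * indicator {0..} s \<partial>lborel) = ennreal (wealth 0)"
proof -
  have "(\<integral>\<^sup>+ s. ennreal (policy s) * indicator {0..} s \<partial>lborel) = ennreal (0 - (- wealth 0))"
  proof (rule nn_integral_FTC_atLeast)
    show "((\<lambda>s. - wealth s) has_real_derivative policy x) (at x)" if "0 \<le> x" for x
      using policy_deriv[OF that] .
    show "((\<lambda>s. - wealth s) \<longlongrightarrow> 0) at_top"
      using tendsto_minus[OF wealth_tendsto_0] by simp
  qed (auto simp: policy_nonneg)
  then show ?thesis by simp
qed

lemma LBINT_policy_powr: "0 \<le> t \<Longrightarrow> (LBINT s=0..t. policy s powr k) = cum_util t"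
proof -
  assume t: "0 \<le> t"
  have "continuous_on {0..t} (\<lambda>s. policy s powr k)"
    by (rule continuous_on_powr'[OF continuous_on_policy continuous_on_const])
      (use k_pos policy_nonneg in auto)
  then show ?thesis
    using LBINT_0_FTC[of t "\<lambda>s. policy s powr k" cum_util] t cum_util_deriv
    by (simp add: policy_def cum_util_0)
qed

lemma nn_integral_discount:
  assumes "0 \<le> r"
  shows "(\<integral>\<^sup>+ s. ennreal (l * discount s) * indicator {r..} s \<partial>lborel) = ennreal (costate r)"
proof -
  have "(\<integral>\<^sup>+ s. ennreal (l * discount s) * indicator {r..} s \<partial>lborel) = ennreal (0 - (- costate r))"
  proof (rule nn_integral_FTC_atLeast)
    fix x assume "r \<le> x"
    then have x: "0 \<le> x" using assms by simp
    show "((\<lambda>s. - costate s) has_real_derivative l * discount x) (at x)"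
      using costate_deriv[OF x] by (auto intro: derivative_eq_intros)
    show "0 \<le> l * discount x"
      using discount_pos[OF x] l_pos by simp
  next
    show "((\<lambda>s. - costate s) \<longlongrightarrow> 0) at_top"
      using tendsto_minus[OF costate_tendsto_0] by simp
  qed measurable
  then show ?thesis by simp
qed

lemma nn_integral_discount_LBINT:
  fixes q :: "real \<Rightarrow> real"
  assumes [measurable]: "q \<in> borel_measurable borel" and nonneg: "\<And>t. 0 \<le> t \<Longrightarrow> 0 \<le> q t"
    and int: "\<And>s. 0 \<le> s \<Longrightarrow> set_integrable lborel {0..s} q"
  shows "(\<integral>\<^sup>+ s. ennreal (l * discount s * (LBINT t=0..s. q t)) * indicator {0..} s \<partial>lborel)
       = (\<integral>\<^sup>+ t. ennreal (q t * costate t) * indicator {0..} t \<partial>lborel)"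
proof -
  define f where "f s t = (ennreal (l * discount s) * indicator {0..} s) * (ennreal (q t) * indicator {0..s} t)"
    for s t :: real
  have [measurable]: "Measurable.pred (borel \<Otimes>\<^sub>M borel) (\<lambda>x::real \<times> real. fst x \<in> {0..snd x})"
    unfolding atLeastAtMost_iff by measurable
  have f_measurable: "(\<lambda>(t, s). f s t) \<in> borel_measurable (lborel \<Otimes>\<^sub>M lborel)"
    unfolding f_def by measurable
  have inner_t: "ennreal (l * discount s * (LBINT t=0..s. q t)) * indicator {0..} s = (\<integral>\<^sup>+ t. f s t \<partial>lborel)"
    for s
  proof (cases "0 \<le> s")
    case True
    have "(\<integral>\<^sup>+ t. f s t \<partial>lborel)
        = ennreal (l * discount s) * (\<integral>\<^sup>+ t. ennreal (q t) * indicator {0..s} t \<partial>lborel)"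
      unfolding f_def using True by (subst nn_integral_cmult) auto
    also have "(\<integral>\<^sup>+ t. ennreal (q t) * indicator {0..s} t \<partial>lborel) = ennreal (LBINT t=0..s. q t)"
      by (rule ennreal_LBINT_0[symmetric]) (use int nonneg True in auto)
    finally show ?thesis
      using True discount_pos[OF True] l_pos by (simp add: ennreal_mult'[symmetric])
  qed (simp add: f_def)
  have inner_s: "(\<integral>\<^sup>+ s. f s t \<partial>lborel) = ennreal (q t * costate t) * indicator {0..} t" for t
  proof (cases "0 \<le> t")
    case True
    have "(\<integral>\<^sup>+ s. f s t \<partial>lborel) = (\<integral>\<^sup>+ s. ennreal (q t) * (ennreal (l * discount s) * indicator {t..} s) \<partial>lborel)"
      unfolding f_def using True
      by (intro nn_integral_cong) (auto split: split_indicator simp: mult.commute)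
    also have "\<dots> = ennreal (q t) * ennreal (costate t)"
      by (subst nn_integral_cmult) (auto simp: nn_integral_discount[OF True])
    finally show ?thesis
      using True nonneg[OF True] costate_nonneg[of t] by (simp add: ennreal_mult)
  qed (simp add: f_def)
  show ?thesis
    unfolding inner_t inner_s[symmetric] by (rule lborel_pair.Fubini'[OF f_measurable])
qed

lemma policy_admissible: "admissible (wealth 0) policy"
proof -
  \<comment> \<open>The budget constraint in \<open>admissible\<close> ranges over \<open>t :: ereal\<close>, including \<open>t = \<infinity>\<close>.\<close>
  have "0 \<le> wealth 0 - (LBINT s=0..t. policy s)" if t: "0 \<le> t" for t :: ereal
  proof (cases t)
    case (real r)
    then show ?thesis
      using t LBINT_policy[of r] wealth_nonneg[of r] by simp
  next
    case PInf
    have "(LBINT s=0..t. policy s) = (\<integral>s. indicator {0<..} s * policy s \<partial>lborel)"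
      using PInf by (simp add: interval_lebesgue_integral_def set_lebesgue_integral_def einterval_def
          zero_ereal_def greaterThan_def)
    also have "\<dots> = enn2real (\<integral>\<^sup>+ s. ennreal (indicator {0<..} s * policy s) \<partial>lborel)"
      by (rule integral_eq_nn_integral) (auto simp: policy_nonneg)
    also have "\<dots> \<le> enn2real (\<integral>\<^sup>+ s. ennreal (policy s) * indicator {0..} s \<partial>lborel)"
      by (intro enn2real_mono nn_integral_mono)
        (auto simp: nn_integral_policy split: split_indicator)
    also have "\<dots> = wealth 0"
      unfolding nn_integral_policy using wealth_nonneg[of 0] by simp
    finally show ?thesis by simp
  qed (use t in simp)
  then show ?thesis
    unfolding admissible_def using policy_nonneg set_integrable_policy by auto
qed

lemma expected_disutility_policy: "expected_disutility a k c l policy = ennreal (costate 0)"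
proof -
  have "exp (- (c + l) * s - a * cum_util s) = discount s" if "0 \<le> s" for s
    using discount_eq[OF that] by (simp add: rho_def)
  then have "expected_disutility a k c l policy = (\<integral>\<^sup>+ s. ennreal (l * discount s) * indicator {0..} s \<partial>lborel)"
    unfolding expected_disutility_def
    by (intro nn_integral_cong) (auto simp: LBINT_policy_powr split: split_indicator)
  then show ?thesis
    using nn_integral_discount[of 0] by simp
qed

text \<open>The tangent line of \<open>exp\<close> at the candidate's exponent.\<close>
lemma discount_tangent_le:
  assumes "s \<ge> 0"
  shows "l * discount s + l * discount s * (a * cum_util s) \<le> l * exp (- (c + l) * s - g) + l * discount s * g"
proof -
  have "discount s * (1 + (a * cum_util s - g)) \<le> discount s * exp (a * cum_util s - g)"
    using discount_pos[OF assms] exp_ge_add_one_self by (intro mult_left_mono) auto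
  also have "\<dots> = exp (- (c + l) * s - g)"
    unfolding discount_eq[OF assms, symmetric] rho_def by (simp flip: exp_add)
  finally have "discount s + discount s * (a * cum_util s) \<le> exp (- (c + l) * s - g) + discount s * g"
    by (simp add: algebra_simps)
  then have "l * (discount s + discount s * (a * cum_util s)) \<le> l * (exp (- (c + l) * s - g) + discount s * g)"
    using l_pos by (intro mult_left_mono) auto
  then show ?thesis
    by (simp add: algebra_simps)
qed

lemma util_costate_le:
  assumes "0 \<le> t" "0 \<le> g"
  shows "a * g powr k * costate t \<le> multiplier * k * g + multiplier * (1 - k) * policy t"
proof -
  have "a * g powr k * costate t = multiplier * (g powr k * consumption t powr (1 - k))"
    using costate_first_order[OF assms(1)] by (simp add: ac_simps)
  also have "\<dots> \<le> multiplier * (k * g + (1 - k) * consumption t)"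
    using Youngs_inequality_nonneg[OF assms(2) consumption_pos[OF assms(1)] k_pos k_less_1]
      multiplier_pos by simp
  also have "\<dots> = multiplier * k * g + multiplier * (1 - k) * policy t"
    using assms(1) by (simp add: policy_def algebra_simps)
  finally show ?thesis .
qed

lemma nn_integral_util_costate_le:
  assumes adm: "admissible (wealth 0) \<gamma>"
  shows "(\<integral>\<^sup>+ t. ennreal (a * \<gamma> t powr k * costate t) * indicator {0..} t \<partial>lborel)
    \<le> ennreal (multiplier * wealth 0)"
proof -
  have [measurable]: "\<gamma> \<in> borel_measurable borel" and nonneg: "\<And>t. 0 \<le> t \<Longrightarrow> 0 \<le> \<gamma> t"
    using adm unfolding admissible_def by auto
  have mk: "0 \<le> multiplier * k" "0 \<le> multiplier * (1 - k)"
    using multiplier_pos k_pos k_less_1 by simp_all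
  have "(\<integral>\<^sup>+ t. ennreal (a * \<gamma> t powr k * costate t) * indicator {0..} t \<partial>lborel)
      \<le> (\<integral>\<^sup>+ t. ennreal (multiplier * k) * (ennreal (\<gamma> t) * indicator {0..} t)
        + ennreal (multiplier * (1 - k)) * (ennreal (policy t) * indicator {0..} t) \<partial>lborel)"
  proof (rule nn_integral_mono)
    fix t :: real
    show "ennreal (a * \<gamma> t powr k * costate t) * indicator {0..} t
        \<le> ennreal (multiplier * k) * (ennreal (\<gamma> t) * indicator {0..} t)
          + ennreal (multiplier * (1 - k)) * (ennreal (policy t) * indicator {0..} t)"
      using util_costate_le[of t "\<gamma> t"] mk nonneg[of t] policy_nonneg[of t]
      by (cases "0 \<le> t")
        (simp_all add: ennreal_plus[symmetric] ennreal_mult[symmetric] ennreal_leI del: ennreal_plus)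
  qed
  also have "\<dots> = ennreal (multiplier * k) * (\<integral>\<^sup>+ t. ennreal (\<gamma> t) * indicator {0..} t \<partial>lborel)
      + ennreal (multiplier * (1 - k)) * (\<integral>\<^sup>+ t. ennreal (policy t) * indicator {0..} t \<partial>lborel)"
    by (subst nn_integral_add) (auto simp: nn_integral_cmult)
  also have "\<dots> \<le> ennreal (multiplier * k) * ennreal (wealth 0) + ennreal (multiplier * (1 - k)) * ennreal (wealth 0)"
    unfolding nn_integral_policy using nn_integral_admissible_le[OF adm]
    by (intro add_mono mult_left_mono) auto
  also have "\<dots> = ennreal (multiplier * k * wealth 0 + multiplier * (1 - k) * wealth 0)"
    using mk wealth_nonneg[of 0] by (simp add: ennreal_mult ennreal_plus)
  also have "multiplier * k * wealth 0 + multiplier * (1 - k) * wealth 0 = multiplier * wealth 0"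
    by (simp add: algebra_simps)
  finally show ?thesis .
qed

lemma nn_integral_util_costate_policy:
  "(\<integral>\<^sup>+ t. ennreal (a * policy t powr k * costate t) * indicator {0..} t \<partial>lborel)
    = ennreal (multiplier * wealth 0)"
proof -
  have "(\<integral>\<^sup>+ t. ennreal (a * policy t powr k * costate t) * indicator {0..} t \<partial>lborel)
      = (\<integral>\<^sup>+ t. ennreal multiplier * (ennreal (policy t) * indicator {0..} t) \<partial>lborel)"
  proof (intro nn_integral_cong)
    fix t :: real
    show "ennreal (a * policy t powr k * costate t) * indicator {0..} t
        = ennreal multiplier * (ennreal (policy t) * indicator {0..} t)"
    proof (cases "0 \<le> t")
      case True
      have "a * policy t powr k * costate t = multiplier * (consumption t powr k * consumption t powr (1 - k))"
        using costate_first_order[OF True] True by (simp add: policy_def ac_simps)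
      also have "consumption t powr k * consumption t powr (1 - k) = policy t"
        using consumption_pos[OF True] True by (simp add: policy_def flip: powr_add)
      finally show ?thesis
        using True multiplier_pos policy_nonneg[of t] by (simp add: ennreal_mult)
    qed simp
  qed
  also have "\<dots> = ennreal (multiplier * wealth 0)"
    using multiplier_pos wealth_nonneg[of 0] by (simp add: nn_integral_cmult nn_integral_policy ennreal_mult)
  finally show ?thesis .
qed

lemma nn_integral_discount_util:
  fixes g :: "real \<Rightarrow> real"
  assumes [measurable]: "g \<in> borel_measurable borel" and "\<And>t. 0 \<le> t \<Longrightarrow> 0 \<le> g t"
    and "\<And>s. 0 \<le> s \<Longrightarrow> set_integrable lborel {0..s} g"
  shows "(\<integral>\<^sup>+ s. ennreal (l * discount s * (a * (LBINT t=0..s. g t powr k))) * indicator {0..} s \<partial>lborel)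
    = (\<integral>\<^sup>+ t. ennreal (a * g t powr k * costate t) * indicator {0..} t \<partial>lborel)"
proof -
  have "set_integrable lborel {0..s} (\<lambda>t. a * g t powr k)" if "0 \<le> s" for s
    using set_integrable_powr[OF assms(1,2) assms(3)[OF that]] k_pos k_less_1
    by (intro set_integrable_mult_right) auto
  then have "(\<integral>\<^sup>+ s. ennreal (l * discount s * (LBINT t=0..s. a * g t powr k)) * indicator {0..} s \<partial>lborel)
      = (\<integral>\<^sup>+ t. ennreal (a * g t powr k * costate t) * indicator {0..} t \<partial>lborel)"
    using assms(2) a_pos by (intro nn_integral_discount_LBINT) auto
  then show ?thesis
    by simp
qed

lemma cum_util_nonneg: "0 \<le> s \<Longrightarrow> 0 \<le> cum_util s"
  using LBINT_0_nonneg[of s "\<lambda>t. policy t powr k"] LBINT_policy_powr[of s] by simp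

lemma nn_integral_discount_cum_util:
  "(\<integral>\<^sup>+ s. ennreal (l * discount s * (a * cum_util s)) * indicator {0..} s \<partial>lborel)
    = ennreal (multiplier * wealth 0)"
proof -
  have "(\<integral>\<^sup>+ s. ennreal (l * discount s * (a * cum_util s)) * indicator {0..} s \<partial>lborel)
      = (\<integral>\<^sup>+ s. ennreal (l * discount s * (a * (LBINT t=0..s. policy t powr k))) * indicator {0..} s \<partial>lborel)"
    by (intro nn_integral_cong) (simp add: LBINT_policy_powr split: split_indicator)
  then show ?thesis
    using nn_integral_discount_util[of policy] nn_integral_util_costate_policy
      policy_nonneg set_integrable_policy by simp
qed

lemma expected_disutility_ge:
  assumes adm: "admissible (wealth 0) \<gamma>"
  shows "ennreal (costate 0) \<le> expected_disutility a k c l \<gamma>"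
proof -
  have [measurable]: "\<gamma> \<in> borel_measurable borel" and nonneg: "\<And>t. 0 \<le> t \<Longrightarrow> 0 \<le> \<gamma> t"
    and int: "\<And>s. 0 \<le> s \<Longrightarrow> set_integrable lborel {0..s} \<gamma>"
    using adm unfolding admissible_def by auto
  define G where "G s = a * (LBINT t=0..s. \<gamma> t powr k)" for s :: real
  have [measurable]: "G \<in> borel_measurable borel"
    unfolding G_def[abs_def] by (measurable, rule borel_measurable_LBINT_0) measurable
  have G_nonneg: "0 \<le> s \<Longrightarrow> 0 \<le> G s" for s
    unfolding G_def using LBINT_0_nonneg[of s "\<lambda>t. \<gamma> t powr k"] a_pos by simp
  have disc_nonneg: "0 \<le> s \<Longrightarrow> 0 \<le> l * discount s" for s
    using discount_pos[of s] l_pos by simp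
  let ?I = "\<lambda>h. \<integral>\<^sup>+ s. ennreal (h s) * indicator {0..} s \<partial>lborel"
  have "ennreal (costate 0) + ennreal (multiplier * wealth 0)
      = ?I (\<lambda>s. l * discount s) + ?I (\<lambda>s. l * discount s * (a * cum_util s))"
    using nn_integral_discount[of 0] nn_integral_discount_cum_util by simp
  also have "\<dots> = ?I (\<lambda>s. l * discount s + l * discount s * (a * cum_util s))"
    using disc_nonneg cum_util_nonneg a_pos by (intro nn_integral_add_Ici[symmetric]) auto
  also have "\<dots> \<le> ?I (\<lambda>s. l * exp (- (c + l) * s - G s) + l * discount s * G s)"
  proof (rule nn_integral_mono)
    fix s :: real
    show "ennreal (l * discount s + l * discount s * (a * cum_util s)) * indicator {0..} s
        \<le> ennreal (l * exp (- (c + l) * s - G s) + l * discount s * G s) * indicator {0..} s"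
      using discount_tangent_le[of s "G s"] by (cases "0 \<le> s") (simp_all add: ennreal_leI)
  qed
  also have "\<dots> = expected_disutility a k c l \<gamma> + ?I (\<lambda>s. l * discount s * G s)"
    unfolding expected_disutility_def G_def[symmetric]
  proof (rule nn_integral_add_Ici)
    show "0 \<le> l * discount s * G s" if "0 \<le> s" for s
      using disc_nonneg[OF that] G_nonneg[OF that] by simp
  qed (use l_pos in simp_all)
  also have "\<dots> \<le> expected_disutility a k c l \<gamma> + ennreal (multiplier * wealth 0)"
    using nn_integral_discount_util[of \<gamma>] nn_integral_util_costate_le[OF adm] nonneg int
    by (intro add_left_mono) (simp add: G_def)
  finally show ?thesis
    by (simp add: ennreal_add_left_cancel_le add.commute)
qed

lemma objective_le:
  assumes adm: "admissible (wealth 0) \<gamma>"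
  shows "objective a k c l \<gamma> \<le> - costate 0"
proof -
  have "expected_disutility a k c l \<gamma> < top"
    using expected_disutility_le[of a c l k \<gamma>] a_pos cl_pos l_pos
    by (auto intro: le_less_trans ennreal_less_top)
  then have "enn2real (ennreal (costate 0)) \<le> enn2real (expected_disutility a k c l \<gamma>)"
    by (rule enn2real_mono[OF expected_disutility_ge[OF adm]])
  then show ?thesis
    using objective_eq_expected_disutility[OF adm, of k l a c] k_pos k_less_1 l_pos costate_nonneg[of 0]
    by simp
qed

lemma objective_policy: "objective a k c l policy = - costate 0"
  using objective_eq_expected_disutility[OF policy_admissible, of k l a c] k_pos k_less_1 l_pos
  by (simp add: expected_disutility_policy costate_nonneg)

lemma vhat_wealth: "vhat a k c l (wealth 0) = - costate 0"
  unfolding vhat_def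
proof (rule cSup_eq_maximum)
  show "- costate 0 \<in> objective a k c l ` {\<gamma>. admissible (wealth 0) \<gamma>}"
    using policy_admissible objective_policy by (intro image_eqI[where x = policy]) auto
qed (use objective_le in auto)

lemma policy_closed_form:
  "policy = (\<lambda>t. if t \<ge> 0 then
      (1 - k) powr (- 1 / k) * a powr (- 1 / k) * l powr (- 1 / k) * (c + l) powr (1 / k)
      * ((l * z0) * exp (k * t * (c + l) / (k - 1))) powr (1 / k)
      * (1 - (l * z0) * exp (k * t * (c + l) / (k - 1)) / l) powr (- 1 / k)
    else 0)"
proof
  fix t :: real
  show "policy t = (if t \<ge> 0 then
      (1 - k) powr (- 1 / k) * a powr (- 1 / k) * l powr (- 1 / k) * (c + l) powr (1 / k)
      * ((l * z0) * exp (k * t * (c + l) / (k - 1))) powr (1 / k)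
      * (1 - (l * z0) * exp (k * t * (c + l) / (k - 1)) / l) powr (- 1 / k)
    else 0)"
  proof (cases "t \<ge> 0")
    case True
    have "(l * z0) * exp (k * t * (c + l) / (k - 1)) = l * zeta t"
      unfolding zeta_def beta_def rho_def using k_less_1 by (simp add: field_simps)
    moreover have "(l * zeta t) powr b = l powr b * zeta t powr b"
      using l_pos zeta_pos[of t] by (simp add: powr_mult)
    moreover have "l powr (- b) * l powr b = 1"
      using l_pos by (simp flip: powr_add)
    ultimately show ?thesis
      using True l_pos consumption_eq[OF True]
      by (simp add: policy_def consumption_coeff_def b_def rho_def ac_simps)
  qed (simp add: policy_def)
qed

lemma wealth_0_closed_form:
  "wealth 0 = (1 - k) powr (1 - 1 / k) * a powr (- 1 / k) * l powr (- 1 / k) * (c + l) powr (1 / k - 1)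
    * (l * z0) powr (1 / k) * hyp2F1 (1 / k) (1 / k) (1 + 1 / k) z0"
proof -
  have "(l * z0) powr b = l powr b * z0 powr b"
    using l_pos z0_pos by (simp add: powr_mult)
  moreover have "l powr (- b) * l powr b = 1"
    using l_pos by (simp flip: powr_add)
  ultimately show ?thesis
    by (simp add: wealth_0 wealth_coeff_def inc_beta_def b_def rho_def ac_simps)
qed

end

lemma consumption_candidate_exists:
  fixes a k c l x :: real
  assumes "a > 0" "0 < k" "k < 1" "l > 0" "c + l > 0" "x > 0"
  obtains z0 where "consumption_candidate a k c l z0" "consumption_candidate.wealth a k c l z0 0 = x"
proof -
  define C where "C = (1 - k) powr (1 - 1 / k) * a powr (- (1 / k)) * (c + l) powr (1 / k - 1)"
  have C: "C > 0"
    unfolding C_def using assms by simp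
  obtain z0 where z0: "0 < z0" "z0 < 1" "inc_beta (1 / k) z0 = x / C"
    using inc_beta_surj[of "1 / k" "x / C"] C assms by auto
  interpret consumption_candidate a k c l z0
    using assms z0 by unfold_locales auto
  have "wealth_coeff = C"
    unfolding wealth_coeff_def C_def b_def rho_def by simp
  then have "wealth 0 = x"
    using C z0(3) by (simp add: wealth_0 b_def)
  then show ?thesis
    using that consumption_candidate_axioms by blast
qed

theorem mainTheorem1:
  fixes a k c l x :: real
  assumes "a > 0" and "0 < k" and "k < 1" and "l > 0" and "c + l > 0" and "x > 0"
  shows "x = (1 - k) powr (1 - 1 / k) * a powr (- 1 / k) * l powr (- 1 / k)
             * (c + l) powr (1 / k - 1)
             * (vhat a k c l x * (c + l) + l) powr (1 / k)
             * hyp2F1 (1 / k) (1 / k) (1 + 1 / k) ((l + vhat a k c l x * (c + l)) / l)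
    \<and> (let w0 = c * vhat a k c l x + l + l * vhat a k c l x;
             \<gamma>s = (\<lambda>t. if t \<ge> 0 then
                  (1 - k) powr (- 1 / k) * a powr (- 1 / k) * l powr (- 1 / k) * (c + l) powr (1 / k)
                  * (w0 * exp (k * t * (c + l) / (k - 1))) powr (1 / k)
                  * (1 - w0 * exp (k * t * (c + l) / (k - 1)) / l) powr (- 1 / k)
                 else 0)
         in admissible x \<gamma>s \<and> objective a k c l \<gamma>s = vhat a k c l x)"
proof -
  obtain z0 where "consumption_candidate a k c l z0" and x: "consumption_candidate.wealth a k c l z0 0 = x"
    using consumption_candidate_exists[OF assms] .
  then interpret consumption_candidate a k c l z0
    by simp
  have vhat: "vhat a k c l x = - costate 0"
    using vhat_wealth unfolding x .
  have w: "vhat a k c l x * (c + l) + l = l * z0"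
    using l_pos cl_pos unfolding vhat costate_0 rho_def by (simp add: field_simps)
  then have w0: "c * vhat a k c l x + l + l * vhat a k c l x = l * z0"
    and z0: "(l + vhat a k c l x * (c + l)) / l = z0"
    using l_pos by (simp_all add: algebra_simps)
  have "x = (1 - k) powr (1 - 1 / k) * a powr (- 1 / k) * l powr (- 1 / k) * (c + l) powr (1 / k - 1)
      * (l * z0) powr (1 / k) * hyp2F1 (1 / k) (1 / k) (1 + 1 / k) z0"
    using wealth_0_closed_form unfolding x .
  moreover have "admissible x policy"
    using policy_admissible unfolding x .
  moreover have "objective a k c l policy = vhat a k c l x"
    using objective_policy unfolding vhat .
  ultimately show ?thesis
    unfolding w w0 z0 Let_def policy_closed_form[symmetric] by blast
qed

end
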